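(* Let $\mathcal{H}$ be a complex separable Hilbert space and $A$ a bounded selfadjoint operator on $\mathcal{H}$. Put $\mathfrak{W}(\sigma_A):=\|A\|+\|I-A\|-1$ and $\mathcal{B}_0(A):=\|A\|-\|I-A\|$. Then $A$ is an effect (i.e. $\mathbb{O}\le A\le I$) if and only if $$\mathfrak{W}(\sigma_A)+\bigl|\mathcal{B}_0(A)\bigr|\le 1.$$
   Context: $\|\cdot\|$ is the operator norm, $I$ the identity, $\mathbb{O}$ the zero operator; $A\le B$ means $\langle\varphi,A\varphi\rangle\le\langle\varphi,B\varphi\rangle$ for all $\varphi$. *)

theory Defs
  imports "HOL-Analysis.Analysis" "HOL-Library.Complex_Order"
begin

text \<open>Complex inner product spaces (physics convention: linear in the second argument).
  A complex Hilbert space is a type of class complex_inner_space that is also complete_space.\<close>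
class complex_inner_space = real_normed_vector +
  fixes scaleC :: "complex \<Rightarrow> 'a \<Rightarrow> 'a"
    and cinner :: "'a \<Rightarrow> 'a \<Rightarrow> complex"
  assumes scaleC_add_right: "scaleC a (x + y) = scaleC a x + scaleC a y"
    and scaleC_add_left: "scaleC (a + b) x = scaleC a x + scaleC b x"
    and scaleC_scaleC: "scaleC a (scaleC b x) = scaleC (a * b) x"
    and scaleC_one: "scaleC 1 x = x"
    and scaleR_scaleC: "scaleR r x = scaleC (complex_of_real r) x"
    and cinner_commute: "cinner x y = cnj (cinner y x)"
    and cinner_add_right: "cinner x (y + z) = cinner x y + cinner x z"
    and cinner_scaleC_right: "cinner x (scaleC a y) = a * cinner x y"
    and cinner_self_nonneg: "0 \<le> Re (cinner x x)"
    and norm_eq_sqrt_cinner: "norm x = sqrt (Re (cinner x x))"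

definition bounded_clinear_op :: "('a::complex_inner_space \<Rightarrow> 'a) \<Rightarrow> bool" where
  "bounded_clinear_op A \<longleftrightarrow>
     (\<forall>x y. A (x + y) = A x + A y) \<and> (\<forall>c x. A (scaleC c x) = scaleC c (A x)) \<and>
     (\<exists>K. \<forall>x. norm (A x) \<le> norm x * K)"

definition selfadjoint :: "('a::complex_inner_space \<Rightarrow> 'a) \<Rightarrow> bool" where
  "selfadjoint A \<longleftrightarrow> (\<forall>x y. cinner (A x) y = cinner x (A y))"

definition op_le :: "('a::complex_inner_space \<Rightarrow> 'a) \<Rightarrow> ('a \<Rightarrow> 'a) \<Rightarrow> bool" where
  "op_le A B \<longleftrightarrow> (\<forall>\<phi>. cinner \<phi> (A \<phi>) \<le> cinner \<phi> (B \<phi>))"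

definition is_effect :: "('a::complex_inner_space \<Rightarrow> 'a) \<Rightarrow> bool" where
  "is_effect A \<longleftrightarrow> op_le (\<lambda>_. 0) A \<and> op_le A id"

definition W_sigma :: "('a::complex_inner_space \<Rightarrow> 'a) \<Rightarrow> real" where
  "W_sigma A = onorm A + onorm (\<lambda>x. x - A x) - 1"

definition B0 :: "('a::complex_inner_space \<Rightarrow> 'a) \<Rightarrow> real" where
  "B0 A = onorm A - onorm (\<lambda>x. x - A x)"

end

theory Submission
  imports Defs
begin

text \<open>Since W(sigma_A) + |B_0(A)| = 2 max(||A||, ||I - A||) - 1, the inequality says exactly
  that A and I - A are contractions. A selfadjoint T with 0 <= T <= I is a contraction:
  Cauchy-Schwarz for the positive form (x, y) |-> <x, T y> gives
  ||Ty||^4 = <Ty, Ty>^2 <= <Ty, T(Ty)> <y, Ty> <= ||Ty||^2 ||y||^2. Conversely, if T is a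
  contraction then <x, Tx> <= ||x||^2; applied to A and to I - A this gives 0 <= A <= I.\<close>

lemma quadratic_nonneg_imp_le:
  fixes p q k :: real
  assumes "k \<ge> 0" "p \<ge> 0" "q \<ge> 0"
    and nonneg: "\<And>t. 0 \<le> p - 2 * t * k + t^2 * k * q"
  shows "k \<le> p * q"
proof (cases "k = 0")
  case True
  with assms show ?thesis by simp
next
  case False
  with \<open>k \<ge> 0\<close> have "k > 0" by simp
  show ?thesis
  proof (cases "q = 0")
    case True
    have "0 \<le> p - 2 * ((p + 1) / (2 * k)) * k" using nonneg[of "(p + 1) / (2 * k)"] True by simp
    also have "\<dots> = -1" using \<open>k > 0\<close> by (simp add: field_simps)
    finally show ?thesis by simp
  next
    case False
    with \<open>q \<ge> 0\<close> have "q > 0" by simp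
    have "0 \<le> p - 2 * (1 / q) * k + (1 / q)^2 * k * q" by (rule nonneg)
    also have "\<dots> = p - k / q" using \<open>q > 0\<close> by (simp add: field_simps power2_eq_square)
    finally show ?thesis using \<open>q > 0\<close> by (simp add: divide_le_eq mult.commute)
  qed
qed

lemma hermitian_diag_real:
  assumes "\<And>x y. B x y = cnj (B y x)"
  shows "B x x = complex_of_real (Re (B x x))"
proof -
  have "Im (B x x) = Im (cnj (B x x))" by (subst assms) (rule refl)
  then show ?thesis by (simp add: complex_eq_iff)
qed

lemma hermitian_form_Cauchy_Schwarz:
  fixes B :: "'a::complex_inner_space \<Rightarrow> 'a \<Rightarrow> complex"
  assumes add: "\<And>x y z. B x (y + z) = B x y + B x z"
    and scale: "\<And>x a y. B x (scaleC a y) = a * B x y"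
    and herm: "\<And>x y. B x y = cnj (B y x)"
    and pos: "\<And>x. 0 \<le> Re (B x x)"
  shows "(cmod (B x y))^2 \<le> Re (B x x) * Re (B y y)"
proof -
  have add_left: "B (y + z) x = B y x + B z x" for x y z
    by (metis herm add complex_cnj_add)
  have scale_left: "B (scaleC a y) x = cnj a * B y x" for x a y
    by (metis herm scale complex_cnj_mult complex_cnj_cnj)
  define c p q where "c = B x y" and "p = Re (B x x)" and "q = Re (B y y)"
  have B_yx: "B y x = cnj c" unfolding c_def by (rule herm)
  have B_xx: "B x x = of_real p" and B_yy: "B y y = of_real q"
    unfolding p_def q_def by (rule hermitian_diag_real[OF herm])+
  have c_cnj: "c * cnj c = of_real ((cmod c)^2)" using complex_norm_square[of c] by simp
  have "0 \<le> p - 2 * t * (cmod c)^2 + t^2 * (cmod c)^2 * q" for t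
  proof -
    define s where "s = - of_real t * cnj c"
    have "B (x + scaleC s y) (x + scaleC s y) = B x x + s * c + cnj s * (cnj c + s * B y y)"
      by (simp add: add add_left scale scale_left c_def B_yx[unfolded c_def] algebra_simps)
    also have "\<dots> = of_real p + of_real (- 2 * t * (cmod c)^2 + t^2 * (cmod c)^2 * q)"
      using c_cnj B_xx B_yy unfolding s_def by (simp add: power2_eq_square) algebra
    finally show ?thesis using pos[of "x + scaleC s y"] by simp
  qed
  then have "(cmod c)^2 \<le> p * q"
    by (intro quadratic_nonneg_imp_le) (auto simp: p_def q_def pos)
  then show ?thesis unfolding c_def p_def q_def .
qed

lemma cinner_diff_right: "cinner x (y - z) = cinner x y - cinner (x::'a::complex_inner_space) z"
  using cinner_add_right[of x "y - z" z] by (simp add: algebra_simps)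

lemma cinner_diff_left: "cinner (y - z) x = cinner y x - cinner (z::'a::complex_inner_space) x"
  by (metis cinner_commute cinner_diff_right complex_cnj_diff)

lemma scaleC_diff_right: "scaleC a (y - z) = scaleC a y - scaleC a (z::'a::complex_inner_space)"
  using scaleC_add_right[of a "y - z" z] by (simp add: algebra_simps)

lemma power2_norm_eq_cinner: "(norm x)^2 = Re (cinner x (x::'a::complex_inner_space))"
  by (simp add: norm_eq_sqrt_cinner cinner_self_nonneg)

lemma cmod_cinner_le_norm: "cmod (cinner x y) \<le> norm x * norm (y::'a::complex_inner_space)"
proof -
  have "(cmod (cinner x y))^2 \<le> Re (cinner x x) * Re (cinner y y)"
    by (rule hermitian_form_Cauchy_Schwarz)
      (auto simp: cinner_add_right cinner_scaleC_right cinner_self_nonneg intro: cinner_commute)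
  also have "\<dots> = (norm x * norm y)^2" by (simp add: power2_norm_eq_cinner power_mult_distrib)
  finally show ?thesis by (rule power2_le_imp_le) simp
qed

lemma Re_cinner_le_if_contraction:
  fixes T :: "'a::complex_inner_space \<Rightarrow> 'a"
  assumes "\<And>x. norm (T x) \<le> norm x"
  shows "Re (cinner x (T x)) \<le> Re (cinner x x)"
proof -
  have "Re (cinner x (T x)) \<le> cmod (cinner x (T x))" by (rule complex_Re_le_cmod)
  also have "\<dots> \<le> norm x * norm (T x)" by (rule cmod_cinner_le_norm)
  also have "\<dots> \<le> norm x * norm x" using assms by (simp add: mult_left_mono)
  also have "\<dots> = Re (cinner x x)" by (simp add: power2_norm_eq_cinner[symmetric] power2_eq_square)
  finally show ?thesis .
qed

lemma contraction_if_form_between_0_and_1: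
  fixes T :: "'a::complex_inner_space \<Rightarrow> 'a"
  assumes add: "\<And>x y. T (x + y) = T x + T y"
    and scale: "\<And>a x. T (scaleC a x) = scaleC a (T x)"
    and sa: "selfadjoint T"
    and lower: "\<And>x. 0 \<le> Re (cinner x (T x))"
    and upper: "\<And>x. Re (cinner x (T x)) \<le> Re (cinner x x)"
  shows "norm (T y) \<le> norm y"
proof -
  let ?B = "\<lambda>x y. cinner x (T y)"
  have T_sym: "cinner (T x) y = cinner x (T y)" for x y using sa unfolding selfadjoint_def by blast
  have CS: "(cmod (?B (T y) y))^2 \<le> Re (?B (T y) (T y)) * Re (?B y y)"
    by (rule hermitian_form_Cauchy_Schwarz)
      (auto simp: add scale cinner_add_right cinner_scaleC_right lower
        intro: trans[OF T_sym[symmetric] cinner_commute])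
  define n m where "n = norm (T y)" and "m = norm y"
  have "n^2 = Re (?B (T y) y)" unfolding n_def by (simp add: power2_norm_eq_cinner T_sym)
  also have "\<dots> \<le> cmod (?B (T y) y)" by (rule complex_Re_le_cmod)
  finally have "(n^2)^2 \<le> (cmod (?B (T y) y))^2" by (intro power_mono) auto
  also note CS
  also have "Re (?B (T y) (T y)) * Re (?B y y) \<le> n^2 * m^2"
    unfolding n_def m_def power2_norm_eq_cinner by (intro mult_mono upper lower cinner_self_nonneg)
  finally have "n^2 * n^2 \<le> n^2 * m^2" by (simp add: power2_eq_square)
  then have "n \<le> m"
  proof (cases "n = 0")
    case False
    then have "n^2 > 0" by simp
    then have "n^2 \<le> m^2" using \<open>n^2 * n^2 \<le> n^2 * m^2\<close> by (simp only: mult_le_cancel_left_pos)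
    then show ?thesis by (rule power2_le_imp_le) (simp add: m_def)
  qed (simp add: m_def)
  then show ?thesis by (simp add: n_def m_def)
qed

lemma onorm_le_1_iff:
  assumes "bounded_linear T"
  shows "onorm T \<le> 1 \<longleftrightarrow> (\<forall>x. norm (T x) \<le> norm x)"
proof
  assume "onorm T \<le> 1"
  then show "\<forall>x. norm (T x) \<le> norm x"
    using onorm[OF assms] by (metis mult_le_cancel_right1 norm_ge_zero order_trans mult.commute mult_right_mono mult_1)
next
  assume "\<forall>x. norm (T x) \<le> norm x"
  then show "onorm T \<le> 1" by (intro onorm_bound) auto
qed

lemma is_effect_iff_Re_cinner:
  assumes "selfadjoint A"
  shows "is_effect A \<longleftrightarrow>
    (\<forall>x. 0 \<le> Re (cinner x (A x)) \<and> Re (cinner x (A x)) \<le> Re (cinner x x))"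
proof -
  have "cinner x (A x) = of_real (Re (cinner x (A x)))" for x
    by (rule hermitian_diag_real[where B = "\<lambda>x y. cinner x (A y)"])
      (metis assms selfadjoint_def cinner_commute)
  moreover have "cinner x x = of_real (Re (cinner x x))" for x :: 'a
    by (rule hermitian_diag_real) (rule cinner_commute)
  moreover have "cinner x 0 = 0" for x :: 'a
    using cinner_add_right[of x 0 0] by simp
  ultimately show ?thesis
    unfolding is_effect_def op_le_def less_eq_complex_def by (metis Im_complex_of_real id_apply zero_complex.sel)
qed

lemma is_effect_iff_contractions:
  fixes A :: "'a::complex_inner_space \<Rightarrow> 'a"
  assumes add: "\<And>x y. A (x + y) = A x + A y"
    and scale: "\<And>a x. A (scaleC a x) = scaleC a (A x)"
    and sa: "selfadjoint A"
  shows "is_effect A \<longleftrightarrow> (\<forall>x. norm (A x) \<le> norm x) \<and> (\<forall>x. norm (x - A x) \<le> norm x)"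
proof
  assume "is_effect A"
  then have lower: "\<And>x. 0 \<le> Re (cinner x (A x))"
    and upper: "\<And>x. Re (cinner x (A x)) \<le> Re (cinner x x)"
    using is_effect_iff_Re_cinner[OF sa] by auto
  have "norm (y - A y) \<le> norm y" for y
  proof (rule contraction_if_form_between_0_and_1)
    show "selfadjoint (\<lambda>x. x - A x)"
      using sa by (simp add: selfadjoint_def cinner_diff_left cinner_diff_right)
    show "x + y - A (x + y) = x - A x + (y - A y)" for x y by (simp add: add)
    show "scaleC a x - A (scaleC a x) = scaleC a (x - A x)" for a x
      by (simp add: scale scaleC_diff_right)
    show "0 \<le> Re (cinner x (x - A x))" for x using upper by (simp add: cinner_diff_right)
    show "Re (cinner x (x - A x)) \<le> Re (cinner x x)" for x using lower by (simp add: cinner_diff_right)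
  qed
  moreover have "norm (A y) \<le> norm y" for y
    by (rule contraction_if_form_between_0_and_1[OF add scale sa lower upper])
  ultimately show "(\<forall>x. norm (A x) \<le> norm x) \<and> (\<forall>x. norm (x - A x) \<le> norm x)" by blast
next
  assume "(\<forall>x. norm (A x) \<le> norm x) \<and> (\<forall>x. norm (x - A x) \<le> norm x)"
  then have "Re (cinner x (A x)) \<le> Re (cinner x x)" "Re (cinner x (x - A x)) \<le> Re (cinner x x)"
    for x using Re_cinner_le_if_contraction[of A] Re_cinner_le_if_contraction[of "\<lambda>x. x - A x"]
    by blast+
  then show "is_effect A"
    unfolding is_effect_iff_Re_cinner[OF sa] by (auto simp: cinner_diff_right)
qed

theorem mainTheorem4:
  fixes A :: "'a::{complex_inner_space, complete_space} \<Rightarrow> 'a"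
  assumes separable: "\<exists>D::'a set. countable D \<and> closure D = UNIV"
    and bounded: "bounded_clinear_op A"
    and sa: "selfadjoint A"
  shows "is_effect A \<longleftrightarrow> W_sigma A + \<bar>B0 A\<bar> \<le> 1"
proof -
  from bounded obtain K where add: "\<And>x y. A (x + y) = A x + A y"
    and scale: "\<And>c x. A (scaleC c x) = scaleC c (A x)" and "\<And>x. norm (A x) \<le> norm x * K"
    unfolding bounded_clinear_op_def by blast
  then have "bounded_linear A"
    by (intro bounded_linear_intro[of A K]) (auto simp: scaleR_scaleC)
  then have "bounded_linear (\<lambda>x. x - A x)"
    by (intro bounded_linear_sub bounded_linear_ident)
  have "is_effect A \<longleftrightarrow> (\<forall>x. norm (A x) \<le> norm x) \<and> (\<forall>x. norm (x - A x) \<le> norm x)"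
    by (rule is_effect_iff_contractions[OF add scale sa])
  also have "\<dots> \<longleftrightarrow> onorm A \<le> 1 \<and> onorm (\<lambda>x. x - A x) \<le> 1"
    using onorm_le_1_iff[OF \<open>bounded_linear A\<close>] onorm_le_1_iff[OF \<open>bounded_linear (\<lambda>x. x - A x)\<close>]
    by simp
  also have "\<dots> \<longleftrightarrow> W_sigma A + \<bar>B0 A\<bar> \<le> 1"
    unfolding W_sigma_def B0_def by (simp add: abs_if) arith
  finally show ?thesis .
qed

end
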